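(* Let $K=(V,E)$ be a finite graph with at least $s\geqslant1$ connected components. Let $\mathscr{C}$ be a color set of size at least $|V|$ that contains at least $|V|-s+1$ distinct colors. Then there exists a coloring of $K$ by $\mathscr{C}$.
   Context: A color set is a finite multiset (elements, i.e. colors, may appear with multiplicities). A coloring of a graph $K=(V,E)$ by a color set $\mathscr{C}$ is a map $\phi\colon V\to\mathscr{C}$, into the elements of the multiset counted with multiplicity, with two properties. First, each element of $\mathscr{C}$ is used at most once, i.e. $|\phi^{-1}(c)|\leqslant1$ for every element $c$ of $\mathscr{C}$. Second, adjacent vertices receive different colors (as values): $\phi(u)\neq\phi(v)$ whenever $(u,v)\in E$. *)

theory Defs
  imports Main "HOL-Library.Multiset"
begin

text \<open>A (finite) graph K = (V,E): vertex set V, edge relation E on V without loops.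
  Edges are treated as undirected for connectivity.\<close>

definition graph :: "'a set \<Rightarrow> ('a \<times> 'a) set \<Rightarrow> bool" where
  "graph V E \<longleftrightarrow> E \<subseteq> V \<times> V \<and> (\<forall>(u,v)\<in>E. u \<noteq> v)"

definition connected_rel :: "'a set \<Rightarrow> ('a \<times> 'a) set \<Rightarrow> ('a \<times> 'a) set" where
  "connected_rel V E = {(u,v). u \<in> V \<and> v \<in> V \<and> (u,v) \<in> (E \<union> E\<inverse>)\<^sup>*}"

definition components :: "'a set \<Rightarrow> ('a \<times> 'a) set \<Rightarrow> 'a set set" where
  "components V E = V // connected_rel V E"

text \<open>A coloring of (V,E) by the color multiset C: each element of C (counted with
  multiplicity) is used at most once, i.e. each color c is assigned to at most
  count C c vertices, and adjacent vertices receive different colors.\<close>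
definition is_coloring :: "'a set \<Rightarrow> ('a \<times> 'a) set \<Rightarrow> 'c multiset \<Rightarrow> ('a \<Rightarrow> 'c) \<Rightarrow> bool" where
  "is_coloring V E C \<phi> \<longleftrightarrow>
     (\<forall>c. card {v \<in> V. \<phi> v = c} \<le> count C c) \<and>
     (\<forall>(u,v)\<in>E. \<phi> u \<noteq> \<phi> v)"

end

theory Submission
  imports Defs "HOL-Library.Disjoint_Sets"
begin

text \<open>It is convenient to argue about any partition \<open>P\<close> of \<open>V\<close> into nonempty blocks such that
  every edge lies inside a block, and to induct on the number of blocks. If \<open>C\<close> has at least
  \<open>|V|\<close> distinct colors, an injective coloring works. Otherwise some color \<open>c\<close> is repeated.
  Color one block \<open>B\<close> injectively by \<open>c\<close> and \<open>|B| - 1\<close> further distinct colors; there are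
  enough of them because every other block contains a vertex. Removing these colors from \<open>C\<close>
  costs only \<open>|B| - 1\<close> distinct colors, since one copy of \<open>c\<close> survives, so the remaining
  blocks satisfy the hypothesis with one block fewer.\<close>

lemma is_coloring_if_inj_on:
  assumes "graph V E" "inj_on \<phi> V" "\<phi> ` V \<subseteq> set_mset C"
  shows "is_coloring V E C \<phi>"
proof -
  have "card {v \<in> V. \<phi> v = c} \<le> count C c" for c
  proof (cases "c \<in># C")
    case True
    have "card {v \<in> V. \<phi> v = c} \<le> card {c}"
      using assms(2) by (intro card_inj_on_le[where f = \<phi>]) (auto intro: inj_on_subset)
    then show ?thesis
      using True by (simp add: Suc_le_eq flip: count_greater_zero_iff)
  next
    case False
    then have "{v \<in> V. \<phi> v = c} = {}"
      using assms(3) by auto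
    then show ?thesis
      by (metis card.empty le0)
  qed
  moreover have "\<forall>(u,v)\<in>E. \<phi> u \<noteq> \<phi> v"
    using assms(1,2) by (fastforce simp: graph_def inj_on_def)
  ultimately show ?thesis
    by (simp add: is_coloring_def)
qed

lemma exists_coloring_if_card_le_card_set_mset:
  assumes "graph V E" "finite V" "card V \<le> card (set_mset C)"
  shows "\<exists>\<phi>. is_coloring V E C \<phi>"
  using card_le_inj[OF assms(2) _ assms(3)] is_coloring_if_inj_on[OF assms(1)] by auto

lemma is_coloring_Un:
  assumes "is_coloring V\<^sub>1 E\<^sub>1 C\<^sub>1 \<phi>\<^sub>1" "is_coloring V\<^sub>2 E\<^sub>2 C\<^sub>2 \<phi>\<^sub>2"
    and "E\<^sub>1 \<subseteq> V\<^sub>1 \<times> V\<^sub>1" "E\<^sub>2 \<subseteq> V\<^sub>2 \<times> V\<^sub>2" "V\<^sub>1 \<inter> V\<^sub>2 = {}" "E \<subseteq> E\<^sub>1 \<union> E\<^sub>2"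
  shows "is_coloring (V\<^sub>1 \<union> V\<^sub>2) E (C\<^sub>1 + C\<^sub>2) (\<lambda>v. if v \<in> V\<^sub>1 then \<phi>\<^sub>1 v else \<phi>\<^sub>2 v)"
    (is "is_coloring _ _ _ ?\<phi>")
proof -
  have "card {v \<in> V\<^sub>1 \<union> V\<^sub>2. ?\<phi> v = c} \<le> count (C\<^sub>1 + C\<^sub>2) c" for c
  proof -
    have "{v \<in> V\<^sub>1 \<union> V\<^sub>2. ?\<phi> v = c} = {v \<in> V\<^sub>1. \<phi>\<^sub>1 v = c} \<union> {v \<in> V\<^sub>2. \<phi>\<^sub>2 v = c}"
      using assms(5) by auto
    then have "card {v \<in> V\<^sub>1 \<union> V\<^sub>2. ?\<phi> v = c} \<le> card {v \<in> V\<^sub>1. \<phi>\<^sub>1 v = c} + card {v \<in> V\<^sub>2. \<phi>\<^sub>2 v = c}"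
      by (simp add: card_Un_le)
    also have "\<dots> \<le> count (C\<^sub>1 + C\<^sub>2) c"
      using assms(1,2) by (simp add: is_coloring_def add_mono)
    finally show ?thesis .
  qed
  moreover have "?\<phi> u \<noteq> ?\<phi> v" if "(u,v) \<in> E" for u v
  proof (cases "(u,v) \<in> E\<^sub>1")
    case True
    then have "u \<in> V\<^sub>1" "v \<in> V\<^sub>1" "\<phi>\<^sub>1 u \<noteq> \<phi>\<^sub>1 v"
      using assms(1,3) by (auto simp: is_coloring_def)
    then show ?thesis
      by simp
  next
    case False
    then have "(u,v) \<in> E\<^sub>2"
      using that assms(6) by blast
    then have "u \<notin> V\<^sub>1" "v \<notin> V\<^sub>1" "\<phi>\<^sub>2 u \<noteq> \<phi>\<^sub>2 v"
      using assms(2,4,5) by (auto simp: is_coloring_def)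
    then show ?thesis
      by simp
  qed
  ultimately show ?thesis
    unfolding is_coloring_def by blast
qed

lemma count_ge_2_if_card_set_mset_less_size:
  assumes "card (set_mset M) < size M"
  shows "\<exists>x. 2 \<le> count M x"
proof (rule ccontr)
  assume "\<nexists>x. 2 \<le> count M x"
  then have "count M x \<le> 1" for x
    by (simp add: not_le numeral_2_eq_2 less_Suc_eq_le)
  then have "count M x \<le> count (mset_set (set_mset M)) x" for x
    by (cases "x \<in># M") (auto simp: not_in_iff)
  then have "M \<subseteq># mset_set (set_mset M)"
    by (simp add: subseteq_mset_def)
  then have "size M \<le> card (set_mset M)"
    using size_mset_mono by fastforce
  with assms show False
    by simp
qed

lemma exists_subset_card_containing:
  assumes "finite A" "a \<in> A" "1 \<le> n" "n \<le> card A"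
  shows "\<exists>S\<subseteq>A. a \<in> S \<and> card S = n"
proof -
  have "n - 1 \<le> card (A - {a})"
    using assms by simp
  then obtain S where "S \<subseteq> A - {a}" "card S = n - 1"
    by (meson obtain_subset_with_card_n)
  with assms have "insert a S \<subseteq> A \<and> a \<in> insert a S \<and> card (insert a S) = n"
    by (auto simp: card_insert_if finite_subset)
  then show ?thesis
    by blast
qed

lemma card_set_mset_le_minus_mset_set:
  assumes "S \<subseteq> set_mset C" "c \<in> S" "2 \<le> count C c"
  shows "card (set_mset C) \<le> card (set_mset (C - mset_set S)) + (card S - 1)"
proof -
  have fin: "finite S"
    using assms(1) finite_subset by blast
  have "set_mset C \<subseteq> set_mset (C - mset_set S) \<union> (S - {c})"
    using assms fin by (auto simp: count_mset_set' simp flip: count_greater_zero_iff split: if_splits)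
  then have "card (set_mset C) \<le> card (set_mset (C - mset_set S)) + card (S - {c})"
    by (meson card_Un_le card_mono finite_Un finite_set_mset fin finite_Diff le_trans)
  then show ?thesis
    using assms(2) fin by simp
qed

lemma card_le_card_Union_if_partition_on:
  assumes "partition_on A P" "finite A"
  shows "card P \<le> card A"
proof -
  have fin: "finite p" if "p \<in> P" for p
    using assms that by (auto simp: partition_on_def intro: finite_subset)
  have "card P = (\<Sum>p\<in>P. 1)"
    by simp
  also have "\<dots> \<le> (\<Sum>p\<in>P. card p)"
    using assms(1) fin by (intro sum_mono) (auto simp: partition_on_def Suc_le_eq card_gt_0_iff)
  also have "\<dots> = card A"
    using assms(1) fin by (rule product_partition[symmetric])
  finally show ?thesis .
qed

lemma partition_on_block_eq:
  assumes "partition_on V P" "A \<in> P" "B \<in> P" "x \<in> A" "x \<in> B"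
  shows "A = B"
  using disjointD[OF partition_onD2[OF assms(1)] assms(2,3)] assms(4,5) by blast

lemma partition_on_Diff_block:
  assumes "partition_on V P" "B \<in> P"
  shows "partition_on (V - B) (P - {B})"
proof -
  have "disjnt B (\<Union>(P - {B}))"
    using partition_on_block_eq[OF assms(1) _ assms(2)] by (auto simp: disjnt_def)
  moreover have "P = insert B (P - {B})"
    using assms(2) by blast
  ultimately show ?thesis
    using assms(1) partition_on_insert by metis
qed

lemma edges_in_blocks_Diff_block:
  assumes "\<forall>(u,v)\<in>E. \<exists>A\<in>P. u \<in> A \<and> v \<in> A" "B \<in> P"
  shows "\<forall>(u,v)\<in>E \<inter> (V - B) \<times> (V - B). \<exists>A\<in>P - {B}. u \<in> A \<and> v \<in> A"
proof clarify
  fix u v assume "(u,v) \<in> E" "u \<in> V" "u \<notin> B"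
  then obtain A where "A \<in> P" "u \<in> A" "v \<in> A"
    using assms(1) by blast
  with \<open>u \<notin> B\<close> show "\<exists>A\<in>P - {B}. u \<in> A \<and> v \<in> A"
    by blast
qed

lemma edges_split_block:
  assumes "graph V E" "partition_on V P" "\<forall>(u,v)\<in>E. \<exists>A\<in>P. u \<in> A \<and> v \<in> A" "B \<in> P"
  shows "E \<subseteq> E \<inter> B \<times> B \<union> E \<inter> (V - B) \<times> (V - B)"
proof (rule subrelI)
  fix u v assume uv: "(u,v) \<in> E"
  then obtain A where A: "A \<in> P" "u \<in> A" "v \<in> A"
    using assms(3) by blast
  have "u \<in> V" "v \<in> V"
    using uv assms(1) by (auto simp: graph_def)
  moreover have "A = B" if "u \<in> B \<or> v \<in> B"
    using that A assms(2,4) partition_on_block_eq by metis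
  ultimately show "(u,v) \<in> E \<inter> B \<times> B \<union> E \<inter> (V - B) \<times> (V - B)"
    using A uv by auto
qed

lemma graph_restrict: "graph V E \<Longrightarrow> graph W (E \<inter> W \<times> W)"
  by (auto simp: graph_def)

lemma is_coloring_extend_by_block:
  assumes "graph V E" "E \<subseteq> E \<inter> B \<times> B \<union> E \<inter> (V - B) \<times> (V - B)"
    and "B \<subseteq> V" "finite B" "finite S" "card B \<le> card S"
    and "is_coloring (V - B) (E \<inter> (V - B) \<times> (V - B)) C \<psi>"
  shows "\<exists>\<phi>. is_coloring V E (mset_set S + C) \<phi>"
proof -
  obtain g where g: "g ` B \<subseteq> S" "inj_on g B"
    using card_le_inj[OF assms(4,5,6)] by blast
  have "is_coloring B (E \<inter> B \<times> B) (mset_set S) g"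
    using g assms(5) by (intro is_coloring_if_inj_on graph_restrict[OF assms(1)]) auto
  then have "is_coloring (B \<union> (V - B)) E (mset_set S + C) (\<lambda>v. if v \<in> B then g v else \<psi> v)"
    by (rule is_coloring_Un[OF _ assms(7) _ _ _ assms(2)]) auto
  moreover have "B \<union> (V - B) = V"
    using assms(3) by blast
  ultimately show ?thesis
    by auto
qed

lemma exists_coloring_if_partition_on:
  assumes "graph V E" "finite V" "partition_on V P"
    and "\<forall>(u,v)\<in>E. \<exists>A\<in>P. u \<in> A \<and> v \<in> A"
    and "t < card P" "card V \<le> size C" "card V \<le> card (set_mset C) + t"
  shows "\<exists>\<phi>. is_coloring V E C \<phi>"
  using assms
proof (induction t arbitrary: V E P C)
  case 0
  then show ?case
    using exists_coloring_if_card_le_card_set_mset[of V E C] by simp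
next
  case (Suc t)
  show ?case
  proof (cases "card V \<le> card (set_mset C)")
    case True
    then show ?thesis
      using Suc.prems(1,2) exists_coloring_if_card_le_card_set_mset by blast
  next
    case False
    then obtain c where c: "2 \<le> count C c"
      using Suc.prems(6) count_ge_2_if_card_set_mset_less_size[of C] by auto
    obtain B where B: "B \<in> P"
      using Suc.prems(5) by fastforce
    have P': "partition_on (V - B) (P - {B})"
      using partition_on_Diff_block[OF Suc.prems(3) B] .
    have BV: "B \<subseteq> V" "B \<noteq> {}" "finite B"
      using B Suc.prems(2,3) by (auto simp: partition_on_def intro: finite_subset)
    then have cardV: "card V = card (V - B) + card B" and "0 < card B"
      using Suc.prems(2) by (simp_all add: card_Diff_subset card_mono card_gt_0_iff)
    have cardP': "t < card (P - {B})"
      using Suc.prems(5) B by simp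
    moreover have "card (P - {B}) \<le> card (V - B)"
      using P' Suc.prems(2) by (simp add: card_le_card_Union_if_partition_on)
    ultimately have "card B \<le> card (set_mset C)"
      using cardV Suc.prems(7) by linarith
    then obtain S where S: "S \<subseteq> set_mset C" "c \<in> S" "card S = card B"
      using exists_subset_card_containing[of "set_mset C" c "card B"] c \<open>0 < card B\<close>
      by (auto simp: Suc_le_eq simp flip: count_greater_zero_iff)
    then have finS: "finite S"
      using finite_subset by blast
    define C' where "C' = C - mset_set S"
    have C: "C = mset_set S + C'"
      using S(1) finS unfolding C'_def
      by (intro subset_mset.add_diff_inverse[symmetric])
        (auto simp: subseteq_mset_def count_mset_set' Suc_le_eq)
    have "card (V - B) \<le> size C'"
      using Suc.prems(6) C cardV S(3) finS by simp
    moreover have "card (V - B) \<le> card (set_mset C') + t"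
      using card_set_mset_le_minus_mset_set[OF S(1,2) c] S(3) \<open>0 < card B\<close> cardV Suc.prems(7)
        cardP' \<open>card (P - {B}) \<le> card (V - B)\<close> unfolding C'_def by linarith
    ultimately obtain \<psi> where \<psi>: "is_coloring (V - B) (E \<inter> (V - B) \<times> (V - B)) C' \<psi>"
      using Suc.IH[OF graph_restrict[OF Suc.prems(1)] _ P' edges_in_blocks_Diff_block[OF Suc.prems(4) B] cardP']
        Suc.prems(2) by blast
    show ?thesis
      unfolding C
      by (rule is_coloring_extend_by_block[OF Suc.prems(1) edges_split_block[OF Suc.prems(1,3,4) B]
            BV(1,3) finS _ \<psi>]) (simp add: S(3))
  qed
qed

lemma equiv_connected_rel: "equiv V (connected_rel V E)"
proof (rule equivI)
  have "sym ((E \<union> E\<inverse>)\<^sup>*)"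
    by (simp add: sym_Un_converse sym_rtrancl)
  then show "sym (connected_rel V E)"
    by (auto simp: connected_rel_def sym_def)
  show "trans (connected_rel V E)"
    by (auto simp: connected_rel_def trans_def)
qed (auto simp: connected_rel_def refl_on_def)

lemma partition_on_components: "partition_on V (components V E)"
  unfolding components_def by (rule partition_on_quotient[OF equiv_connected_rel])

lemma edge_in_component:
  assumes "graph V E" "(u,v) \<in> E"
  shows "\<exists>K\<in>components V E. u \<in> K \<and> v \<in> K"
proof -
  have "u \<in> V" "v \<in> V"
    using assms by (auto simp: graph_def)
  with assms(2) have "u \<in> connected_rel V E `` {u}" "v \<in> connected_rel V E `` {u}"
    by (auto simp: connected_rel_def)
  with \<open>u \<in> V\<close> show ?thesis
    unfolding components_def by (blast intro: quotientI)
qed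

theorem lemma4p7:
  fixes V :: "'a set" and E :: "('a \<times> 'a) set" and C :: "'c multiset" and s :: nat
  assumes "graph V E" and "finite V"
    and "s \<ge> 1" and "card (components V E) \<ge> s"
    and "size C \<ge> card V"
    and "card (set_mset C) \<ge> card V - s + 1"
  shows "\<exists>\<phi>. is_coloring V E C \<phi>"
proof (rule exists_coloring_if_partition_on[OF assms(1,2) partition_on_components])
  show "\<forall>(u,v)\<in>E. \<exists>K\<in>components V E. u \<in> K \<and> v \<in> K"
    using edge_in_component[OF assms(1)] by blast
  show "s - 1 < card (components V E)" "card V \<le> size C" "card V \<le> card (set_mset C) + (s - 1)"
    using assms(3-6) by linarith+
qed

end
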